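(* Let $\mathcal{M}$ be a metric space on $\omega$ with completion $\mathcal{C}(\mathcal{M})$, and let $\bar a,\bar b$ be tuples of elements of $\mathcal{C}(\mathcal{M})$ of the same length. For every ordinal $\alpha$ and every $f\in\mathrm{REC}$, if $\bar a\sim_\alpha\bar b$ then $\bar a\sim^f_\alpha\bar b$. Consequently $\mathrm{SR}(\bar a,\bar b)\le \mathrm{R}(\bar a,\bar b)$.
   Context: $\mathcal{C}(\mathcal{M})$ is a structure in the language $\mathscr{U}=\{\dot d_q,\dot d^q:q\in\mathbb{Q}^+\}$, $\dot d_q(x,y)\Leftrightarrow d(x,y)<q$, $\dot d^q(x,y)\Leftrightarrow d(x,y)>q$. Back-and-forth relations in $\mathcal{C}(\mathcal{M})$: $\bar a\sim_0\bar b$ iff $a_i\mapsto b_i$ is a partial $\mathscr{U}$-isomorphism; $\bar a\sim_{\alpha+1}\bar b$ iff for every $a\in\mathcal{C}(\mathcal{M})$ there is $b$ with $\bar a a\sim_\alpha\bar b b$ and conversely; at limits take intersections; $\mathrm{SR}(\bar a,\bar b)$ is the least $\mu$ with $\neg(\bar a\sim_\mu\bar b)$, or $\infty$. $\mathrm{REC}$ is the set of recursive, strictly decreasing $f:\omega\to\mathbb{Q}^+$ converging to $0$. For $f\in\mathrm{REC}$, tuples $\bar a=(a_0,\dots,a_{p-1})$, $\bar b=(b_0,\dots,b_{p-1})$ from $\mathcal{C}(\mathcal{M})$ and an ordinal $\alpha$, the game $G^{f,\bar a,\bar b}_\alpha$ is played as follows: at move $i=0,1,2,\dots$, Player 1 plays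 an ordinal $\alpha_i$ with $\alpha_0<\alpha$ and $\alpha_i<\alpha_{i-1}$ for $i>0$, together with an element of $\mathcal{M}$ (i.e. a natural number): if $i$ is even Player 1 plays $c_i\in\mathcal{M}$ and Player 2 responds with $d_i\in\mathcal{M}$; if $i$ is odd Player 1 plays $d_i\in\mathcal{M}$ and Player 2 responds with $c_i\in\mathcal{M}$. The game ends after Player 2 responds to the move at which Player 1 plays $\alpha_{k-1}=0$. Player 2 wins iff (I) for all $i<p$, $j<k$: $|d(a_i,c_j)-d(b_i,d_j)|<f(j)$, and (II) for all $i,j<k$: $|d(c_i,c_j)-d(d_i,d_j)|<f(i)+f(j)$, distances computed in $\mathcal{C}(\mathcal{M})$. $\bar a\sim^f_\alpha\bar b$ means Player 2 has a winning strategy in $G^{f,\bar a,\bar b}_\alpha$. $\mathrm{R}(\bar a,\bar b)$ is the least ordinal $\mu$ such that $\neg(\bar a\sim^f_\mu\bar b)$ for some $f\in\mathrm{REC}$, or $\infty$ if there is none. *)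

theory Defs
  imports Complex_Main "HOL-Library.Nat_Bijection"
begin

datatype recf = RZero | RSucc | RProj nat | RComp recf "recf list" | RPrim recf recf | RMu recf

inductive reval :: "recf \<Rightarrow> nat list \<Rightarrow> nat \<Rightarrow> bool" where
  rzero: "reval RZero xs 0"
| rsucc: "reval RSucc (x # xs) (Suc x)"
| rproj: "i < length xs \<Longrightarrow> reval (RProj i) xs (xs ! i)"
| rcomp: "length ys = length hs \<Longrightarrow> (\<forall>i<length hs. reval (hs ! i) xs (ys ! i))
           \<Longrightarrow> reval g ys z \<Longrightarrow> reval (RComp g hs) xs z"
| rprim0: "reval g xs z \<Longrightarrow> reval (RPrim g h) (0 # xs) z"
| rprimS: "reval (RPrim g h) (n # xs) y \<Longrightarrow> reval h (n # y # xs) z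
           \<Longrightarrow> reval (RPrim g h) (Suc n # xs) z"
| rmu: "reval g (n # xs) 0 \<Longrightarrow> (\<forall>m<n. \<exists>y. reval g (m # xs) (Suc y))
           \<Longrightarrow> reval (RMu g) xs n"

definition total_recursive :: "(nat \<Rightarrow> nat) \<Rightarrow> bool" where
  "total_recursive g \<longleftrightarrow> (\<exists>P. \<forall>n. reval P [n] (g n))"

definition rat_of_code :: "nat \<Rightarrow> rat" where
  "rat_of_code k = (case prod_decode k of (p, q) \<Rightarrow> of_nat p / of_nat (Suc q))"

definition recursive_rat_seq :: "(nat \<Rightarrow> rat) \<Rightarrow> bool" where
  "recursive_rat_seq f \<longleftrightarrow> (\<exists>g. total_recursive g \<and> (\<forall>n. f n = rat_of_code (g n)))"

definition REC :: "(nat \<Rightarrow> rat) set" where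
  "REC = {f. recursive_rat_seq f \<and> (\<forall>n. f n > 0) \<and> (\<forall>n. f (Suc n) < f n)
            \<and> (\<lambda>n. real_of_rat (f n)) \<longlonglongrightarrow> 0}"

text \<open>Partial isomorphism in the language with d_q, d^q (q positive rational), and equality.\<close>
definition pariso :: "'c::metric_space list \<Rightarrow> 'c list \<Rightarrow> bool" where
  "pariso as bs \<longleftrightarrow> length as = length bs \<and>
     (\<forall>i<length as. \<forall>j<length as.
        (as ! i = as ! j \<longleftrightarrow> bs ! i = bs ! j) \<and>
        (\<forall>q::rat. q > 0 \<longrightarrow>
           (dist (as ! i) (as ! j) < real_of_rat q \<longleftrightarrow> dist (bs ! i) (bs ! j) < real_of_rat q) \<and>
           (dist (as ! i) (as ! j) > real_of_rat q \<longleftrightarrow> dist (bs ! i) (bs ! j) > real_of_rat q)))"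

text \<open>Ordinals are rendered as elements of an arbitrary well-ordered type 'o.
  Zero = least element; successor of beta = alpha with beta < alpha and nothing in between;
  otherwise alpha is a limit.\<close>
definition bf_step :: "('o::wellorder \<Rightarrow> 'c::metric_space list \<Rightarrow> 'c list \<Rightarrow> bool)
     \<Rightarrow> 'o \<Rightarrow> 'c list \<Rightarrow> 'c list \<Rightarrow> bool" where
  "bf_step rec \<alpha> as bs =
    (if (\<forall>\<beta>. \<not> \<beta> < \<alpha>) then pariso as bs
     else if (\<exists>\<beta><\<alpha>. \<forall>\<gamma>. \<not> (\<beta> < \<gamma> \<and> \<gamma> < \<alpha>)) then
       (let \<beta> = (THE \<beta>. \<beta> < \<alpha> \<and> (\<forall>\<gamma>. \<not> (\<beta> < \<gamma> \<and> \<gamma> < \<alpha>))) in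
         (\<forall>a. \<exists>b. rec \<beta> (as @ [a]) (bs @ [b])) \<and> (\<forall>b. \<exists>a. rec \<beta> (as @ [a]) (bs @ [b])))
     else (\<forall>\<beta><\<alpha>. rec \<beta> as bs))"

definition bf :: "'o::wellorder \<Rightarrow> 'c::metric_space list \<Rightarrow> 'c list \<Rightarrow> bool" where
  "bf = wfrec {(x, y). x < y} bf_step"

text \<open>SRank: least mu with not (as ~_mu bs); None stands for infinity.\<close>
definition SRank :: "'c::metric_space list \<Rightarrow> 'c list \<Rightarrow> 'o::wellorder option" where
  "SRank as bs = (if \<exists>\<mu>::'o. \<not> bf \<mu> as bs then Some (LEAST \<mu>. \<not> bf \<mu> as bs) else None)"

text \<open>A complete sequence of Player 1 moves (ordinal, element of M):
  alpha_0 < alpha, strictly decreasing, last ordinal is 0 (the least element).\<close>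
definition p1_complete :: "'o::wellorder \<Rightarrow> ('o \<times> nat) list \<Rightarrow> bool" where
  "p1_complete \<alpha> ms \<longleftrightarrow> ms \<noteq> [] \<and> fst (ms ! 0) < \<alpha> \<and>
     (\<forall>i. Suc i < length ms \<longrightarrow> fst (ms ! Suc i) < fst (ms ! i)) \<and>
     (\<forall>\<beta>. \<not> \<beta> < fst (last ms))"

text \<open>Player 2 strategy: response to the current move given all Player 1 moves so far.\<close>
definition resp :: "(('o \<times> nat) list \<Rightarrow> nat) \<Rightarrow> ('o \<times> nat) list \<Rightarrow> nat \<Rightarrow> nat" where
  "resp \<sigma> ms i = \<sigma> (take (Suc i) ms)"

definition cseq :: "(('o \<times> nat) list \<Rightarrow> nat) \<Rightarrow> ('o \<times> nat) list \<Rightarrow> nat \<Rightarrow> nat" where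
  "cseq \<sigma> ms i = (if even i then snd (ms ! i) else resp \<sigma> ms i)"

definition dseq :: "(('o \<times> nat) list \<Rightarrow> nat) \<Rightarrow> ('o \<times> nat) list \<Rightarrow> nat \<Rightarrow> nat" where
  "dseq \<sigma> ms i = (if even i then resp \<sigma> ms i else snd (ms ! i))"

definition p2_wins :: "(nat \<Rightarrow> 'c::metric_space) \<Rightarrow> (nat \<Rightarrow> rat) \<Rightarrow> 'c list \<Rightarrow> 'c list
     \<Rightarrow> nat \<Rightarrow> (nat \<Rightarrow> nat) \<Rightarrow> (nat \<Rightarrow> nat) \<Rightarrow> bool" where
  "p2_wins e f as bs k c d \<longleftrightarrow>
     (\<forall>i<length as. \<forall>j<k. \<bar>dist (as ! i) (e (c j)) - dist (bs ! i) (e (d j))\<bar> < real_of_rat (f j)) \<and>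
     (\<forall>i<k. \<forall>j<k. \<bar>dist (e (c i)) (e (c j)) - dist (e (d i)) (e (d j))\<bar>
                     < real_of_rat (f i) + real_of_rat (f j))"

definition simf :: "(nat \<Rightarrow> 'c::metric_space) \<Rightarrow> (nat \<Rightarrow> rat) \<Rightarrow> 'o::wellorder \<Rightarrow> 'c list \<Rightarrow> 'c list \<Rightarrow> bool" where
  "simf e f \<alpha> as bs \<longleftrightarrow> (\<exists>\<sigma> :: ('o \<times> nat) list \<Rightarrow> nat. \<forall>ms. p1_complete \<alpha> ms \<longrightarrow>
       p2_wins e f as bs (length ms) (cseq \<sigma> ms) (dseq \<sigma> ms))"

definition RRank :: "(nat \<Rightarrow> 'c::metric_space) \<Rightarrow> 'c list \<Rightarrow> 'c list \<Rightarrow> 'o::wellorder option" where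
  "RRank e as bs = (if \<exists>\<mu>::'o. \<exists>f\<in>REC. \<not> simf e f \<mu> as bs
                  then Some (LEAST \<mu>. \<exists>f\<in>REC. \<not> simf e f \<mu> as bs) else None)"

definition le_inf :: "'o::linorder option \<Rightarrow> 'o option \<Rightarrow> bool" where
  "le_inf x y = (case y of None \<Rightarrow> True | Some m \<Rightarrow> (case x of None \<Rightarrow> False | Some n \<Rightarrow> n \<le> m))"

end

theory Submission
  imports Defs
begin

(* Player 2 wins by playing a shadow game in the completion. Besides the actual moves c_j, d_j
   she keeps points x_j, y_j of C(M) with  as @ x_0..x_j  ~_(alpha_j)  bs @ y_0..y_j : the
   element Player 1 plays is copied to its own side, and the back-and-forth property of
   ~_(alpha_(j-1)) at the smaller ordinal alpha_j supplies its partner on the other side; she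
   answers with an element of M within f(j) of that partner. When Player 1 reaches ordinal 0
   the shadow tuples are partially isomorphic, so by density of the rationals they have equal
   distances, and the triangle inequality bounds the errors in (I) and (II) by f(j) and
   f(i) + f(j). That ~_alpha has the back-and-forth property at every beta < alpha rests on
   ~_beta being closed under subtuples. The rank inequality holds because the least mu where
   some ~^f_mu fails is an ordinal where ~_mu fails. *)

lemma zero_succ_limit_cases:
  fixes \<alpha> :: "'o::wellorder"
  obtains (zero) "\<forall>\<beta>. \<not> \<beta> < \<alpha>"
    | (succ) \<beta> where "\<beta> < \<alpha>" "\<forall>\<gamma>. \<not> (\<beta> < \<gamma> \<and> \<gamma> < \<alpha>)"
    | (limit) "\<exists>\<beta>. \<beta> < \<alpha>" "\<not> (\<exists>\<beta><\<alpha>. \<forall>\<gamma>. \<not> (\<beta> < \<gamma> \<and> \<gamma> < \<alpha>))"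
  by blast

lemma immediate_predecessor_unique:
  fixes \<alpha> \<beta> :: "'o::wellorder"
  assumes "\<beta> < \<alpha>" "\<forall>\<gamma>. \<not> (\<beta> < \<gamma> \<and> \<gamma> < \<alpha>)"
  shows "(THE \<beta>. \<beta> < \<alpha> \<and> (\<forall>\<gamma>. \<not> (\<beta> < \<gamma> \<and> \<gamma> < \<alpha>))) = \<beta>"
  using assms by (intro the_equality) (auto, metis linorder_neqE)

lemma bf_unfold: "(bf :: 'o::wellorder \<Rightarrow> 'c::metric_space list \<Rightarrow> _) = bf_step bf"
  unfolding bf_def
proof (rule wfrec_fixpoint[OF wf])
  show "adm_wf {(x, y). x < y} (bf_step :: _ \<Rightarrow> 'o \<Rightarrow> 'c list \<Rightarrow> _)"
    unfolding adm_wf_def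
  proof (intro allI impI ext)
    fix f g :: "'o \<Rightarrow> 'c list \<Rightarrow> 'c list \<Rightarrow> bool" and \<alpha> :: 'o and as bs :: "'c list"
    assume "\<forall>\<beta>. (\<beta>, \<alpha>) \<in> {(x, y). x < y} \<longrightarrow> f \<beta> = g \<beta>"
    then have agree: "\<And>\<beta>. \<beta> < \<alpha> \<Longrightarrow> f \<beta> = g \<beta>" by blast
    show "bf_step f \<alpha> as bs = bf_step g \<alpha> as bs"
    proof (cases \<alpha> rule: zero_succ_limit_cases)
      case (succ \<beta>)
      then show ?thesis
        unfolding bf_step_def immediate_predecessor_unique[OF succ] using agree[OF succ(1)] by auto
    qed (auto simp: bf_step_def agree)
  qed
qed

definition back_and_forth :: "'o::wellorder \<Rightarrow> 'c::metric_space list \<Rightarrow> 'c list \<Rightarrow> bool" where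
  "back_and_forth \<beta> as bs \<longleftrightarrow>
     (\<forall>a. \<exists>b. bf \<beta> (as @ [a]) (bs @ [b])) \<and> (\<forall>b. \<exists>a. bf \<beta> (as @ [a]) (bs @ [b]))"

lemma bf_zero: "\<forall>\<beta>. \<not> \<beta> < \<alpha> \<Longrightarrow> bf \<alpha> as bs = pariso as bs"
  by (subst bf_unfold) (simp add: bf_step_def)

lemma bf_succ:
  assumes "\<beta> < \<alpha>" "\<forall>\<gamma>. \<not> (\<beta> < \<gamma> \<and> \<gamma> < \<alpha>)"
  shows "bf \<alpha> as bs = back_and_forth \<beta> as bs"
proof -
  have "\<not> (\<forall>\<beta>. \<not> \<beta> < \<alpha>)" "\<exists>\<beta><\<alpha>. \<forall>\<gamma>. \<not> (\<beta> < \<gamma> \<and> \<gamma> < \<alpha>)" using assms by blast+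
  then show ?thesis
    by (subst bf_unfold) (simp only: bf_step_def if_False if_True immediate_predecessor_unique[OF assms]
        Let_def back_and_forth_def)
qed

lemma bf_limit:
  assumes "\<exists>\<beta>. \<beta> < \<alpha>" "\<not> (\<exists>\<beta><\<alpha>. \<forall>\<gamma>. \<not> (\<beta> < \<gamma> \<and> \<gamma> < \<alpha>))"
  shows "bf \<alpha> as bs = (\<forall>\<beta><\<alpha>. bf \<beta> as bs)"
  using assms by (subst bf_unfold) (auto simp: bf_step_def)

lemma bf_length_eq:
  fixes \<alpha> :: "'o::wellorder" and as bs :: "'c::metric_space list"
  shows "bf \<alpha> as bs \<Longrightarrow> length as = length bs"
proof (induction \<alpha> arbitrary: as bs rule: less_induct)
  case (less \<alpha>)
  show ?case
  proof (cases \<alpha> rule: zero_succ_limit_cases)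
    case zero
    then show ?thesis using less.prems by (simp add: bf_zero pariso_def)
  next
    case (succ \<beta>)
    then obtain b where "bf \<beta> (as @ [undefined]) (bs @ [b])"
      using less.prems by (meson bf_succ back_and_forth_def)
    then have "length (as @ [undefined]) = length (bs @ [b])" by (rule less.IH[OF succ(1)])
    then show ?thesis by simp
  next
    case limit
    then show ?thesis using less by (auto simp: bf_limit)
  qed
qed

lemma bf_map_nth:
  fixes \<alpha> :: "'o::wellorder" and as bs :: "'c::metric_space list"
  shows "bf \<alpha> as bs \<Longrightarrow> set h \<subseteq> {..<length as} \<Longrightarrow> bf \<alpha> (map ((!) as) h) (map ((!) bs) h)"
proof (induction \<alpha> arbitrary: as bs h rule: less_induct)
  case (less \<alpha>)
  show ?case
  proof (cases \<alpha> rule: zero_succ_limit_cases)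
    case zero
    then show ?thesis using less.prems by (auto simp: bf_zero pariso_def subset_eq)
  next
    case (succ \<beta>)
    have len: "length as = length bs" using bf_length_eq[OF less.prems(1)] .
    have "bf \<beta> (map ((!) as) h @ [a]) (map ((!) bs) h @ [b])" if "bf \<beta> (as @ [a]) (bs @ [b])" for a b
    proof -
      have "set (h @ [length as]) \<subseteq> {..<length (as @ [a])}" using less.prems(2) by auto
      then have "bf \<beta> (map ((!) (as @ [a])) (h @ [length as])) (map ((!) (bs @ [b])) (h @ [length as]))"
        by (rule less.IH[OF succ(1) that])
      moreover have "map ((!) (xs @ [x])) (h @ [length as]) = map ((!) xs) h @ [x]"
        if "length xs = length as" for xs and x :: 'c
        using less.prems(2) that by (auto simp: nth_append subset_eq)
      ultimately show ?thesis using len by metis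
    qed
    then show ?thesis using less.prems(1) unfolding bf_succ[OF succ] back_and_forth_def by meson
  next
    case limit
    then show ?thesis using less by (auto simp: bf_limit)
  qed
qed

lemma bf_butlast:
  assumes "bf \<alpha> (as @ [a]) (bs @ [b])"
  shows "bf \<alpha> as bs"
proof -
  have "length as = length bs" using bf_length_eq[OF assms] by simp
  moreover have "map ((!) (xs @ [x])) [0..<length xs] = xs" for xs and x :: 'c
    by (rule nth_equalityI) (auto simp: nth_append)
  moreover have "bf \<alpha> (map ((!) (as @ [a])) [0..<length as]) (map ((!) (bs @ [b])) [0..<length as])"
    by (rule bf_map_nth[OF assms]) auto
  ultimately show ?thesis by metis
qed

lemma back_and_forth_imp_bf: "back_and_forth \<beta> as bs \<Longrightarrow> bf \<beta> as bs"
  unfolding back_and_forth_def using bf_butlast by blast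

lemma bf_imp_back_and_forth:
  fixes \<alpha> :: "'o::wellorder" and as bs :: "'c::metric_space list"
  shows "\<beta> < \<alpha> \<Longrightarrow> bf \<alpha> as bs \<Longrightarrow> back_and_forth \<beta> as bs"
proof (induction \<alpha> arbitrary: \<beta> as bs rule: less_induct)
  case (less \<alpha>)
  show ?case
  proof (cases \<alpha> rule: zero_succ_limit_cases)
    case zero
    then show ?thesis using less.prems(1) by blast
  next
    case (succ \<gamma>)
    then have extend_\<gamma>: "back_and_forth \<gamma> as bs" using less.prems(2) by (simp add: bf_succ)
    show ?thesis
    proof (cases "\<beta> = \<gamma>")
      case False
      then have "\<beta> < \<gamma>" using succ less.prems(1) by (metis linorder_neqE)
      then have "bf \<beta> (as @ [a]) (bs @ [b])" if "bf \<gamma> (as @ [a]) (bs @ [b])" for a b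
        using less.IH[OF succ(1)] that back_and_forth_imp_bf by blast
      then show ?thesis using extend_\<gamma> unfolding back_and_forth_def by meson
    qed (use extend_\<gamma> in simp)
  next
    case limit
    then obtain \<gamma> where "\<beta> < \<gamma>" "\<gamma> < \<alpha>" using less.prems(1) by blast
    then show ?thesis using less by (auto simp: bf_limit[OF limit])
  qed
qed

lemma eq_if_same_rat_upper_bounds:
  fixes u v :: real
  assumes "0 \<le> u" "0 \<le> v" "\<And>q. q > 0 \<Longrightarrow> u < of_rat q \<longleftrightarrow> v < of_rat q"
  shows "u = v"
proof -
  have "\<not> x < y" if "0 \<le> x" "\<And>q. q > 0 \<Longrightarrow> x < of_rat q \<longleftrightarrow> y < of_rat q" for x y :: real
  proof
    assume "x < y"
    then obtain q where "x < of_rat q" "of_rat q < y" using of_rat_dense by blast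
    moreover from this \<open>0 \<le> x\<close> have "q > 0" by (metis le_less_trans zero_less_of_rat_iff)
    ultimately show False using that(2) by fastforce
  qed
  then show ?thesis using assms by (metis linorder_neqE)
qed

lemma pariso_dist_eq:
  assumes "pariso as bs" "i < length as" "j < length as"
  shows "dist (as ! i) (as ! j) = dist (bs ! i) (bs ! j)"
  using assms unfolding pariso_def by (intro eq_if_same_rat_upper_bounds) auto

lemma abs_dist_diff_le_of_dist_eq:
  assumes "dist x1 x2 = dist y1 y2"
  shows "\<bar>dist u1 u2 - dist v1 v2\<bar> \<le> dist u1 x1 + dist u2 x2 + dist v1 y1 + dist v2 y2"
  using assms dist_triangle[of u1 u2 x1] dist_triangle[of x1 u2 x2] dist_triangle[of x1 x2 u1]
    dist_triangle[of u1 x2 u2] dist_triangle[of v1 v2 y1] dist_triangle[of y1 v2 y2]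
    dist_triangle[of y1 y2 v1] dist_triangle[of v1 y2 v2]
  by (simp add: dist_commute abs_le_iff)

context
  fixes e :: "nat \<Rightarrow> 'c::metric_space" and as bs :: "'c list"
begin

definition shadow_next :: "'o::wellorder \<Rightarrow> nat \<Rightarrow> nat \<Rightarrow> ('c \<times> 'c) list \<Rightarrow> 'c \<times> 'c" where
  "shadow_next \<beta> m j ps = (if even j
     then (e m, SOME y. bf \<beta> (as @ map fst ps @ [e m]) (bs @ map snd ps @ [y]))
     else (SOME x. bf \<beta> (as @ map fst ps @ [x]) (bs @ map snd ps @ [e m]), e m))"

primrec shadows :: "('o::wellorder \<times> nat) list \<Rightarrow> nat \<Rightarrow> ('c \<times> 'c) list" where
  "shadows ms 0 = []"
| "shadows ms (Suc j) = shadows ms j @ [shadow_next (fst (ms ! j)) (snd (ms ! j)) j (shadows ms j)]"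

definition shadow :: "('o::wellorder \<times> nat) list \<Rightarrow> nat \<Rightarrow> 'c \<times> 'c" where
  "shadow ms j = shadows ms (Suc j) ! j"

(* The shadow of move j depends only on the first j + 1 moves, so the strategy can recompute
   it from the prefix it is given. *)
definition shadow_strategy :: "(nat \<Rightarrow> rat) \<Rightarrow> ('o::wellorder \<times> nat) list \<Rightarrow> nat" where
  "shadow_strategy f ms = (let j = length ms - 1 in
     SOME n. dist (e n) ((if even j then snd else fst) (shadow ms j)) < real_of_rat (f j))"

lemma length_shadows [simp]: "length (shadows ms j) = j"
  by (induction j) auto

lemma shadow_eq: "shadow ms j = shadow_next (fst (ms ! j)) (snd (ms ! j)) j (shadows ms j)"
  by (simp add: shadow_def nth_append)

lemma shadows_eq_map: "shadows ms n = map (shadow ms) [0..<n]"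
  by (induction n) (simp_all add: shadow_eq)

lemma shadows_take: "j \<le> n \<Longrightarrow> shadows (take n ms) j = shadows ms j"
  by (induction j) auto

lemma shadow_take: "j < n \<Longrightarrow> shadow (take n ms) j = shadow ms j"
  by (simp add: shadow_def shadows_take)

lemma bf_shadow_next:
  assumes "bf \<gamma> (as @ map fst ps) (bs @ map snd ps)" "\<beta> < \<gamma>"
  shows "bf \<beta> (as @ map fst (ps @ [shadow_next \<beta> m j ps])) (bs @ map snd (ps @ [shadow_next \<beta> m j ps]))"
proof -
  have "back_and_forth \<beta> (as @ map fst ps) (bs @ map snd ps)"
    using bf_imp_back_and_forth[OF assms(2,1)] .
  then have "\<exists>y. bf \<beta> (as @ map fst ps @ [x]) (bs @ map snd ps @ [y])"
    and "\<exists>x. bf \<beta> (as @ map fst ps @ [x]) (bs @ map snd ps @ [y])" for x y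
    unfolding back_and_forth_def by auto
  then show ?thesis by (auto simp: shadow_next_def intro: someI_ex)
qed

lemma bf_shadows:
  assumes "p1_complete \<alpha> ms" "bf \<alpha> as bs" "j < length ms"
  shows "bf (fst (ms ! j)) (as @ map fst (shadows ms (Suc j))) (bs @ map snd (shadows ms (Suc j)))"
  using assms(3)
proof (induction j)
  case 0
  then show ?case using assms(1,2) bf_shadow_next[of \<alpha> "[]"] by (simp add: p1_complete_def)
next
  case (Suc j)
  then show ?case using assms(1) bf_shadow_next[OF Suc.IH] by (simp add: p1_complete_def)
qed

lemma shadow_strategy_close:
  assumes dense: "\<forall>x. \<forall>\<epsilon>>0. \<exists>n. dist (e n) x < \<epsilon>" and "f j > 0" and "j < length ms"
  shows "dist (e (cseq (shadow_strategy f) ms j)) (fst (shadow ms j))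
       + dist (e (dseq (shadow_strategy f) ms j)) (snd (shadow ms j)) < real_of_rat (f j)"
proof -
  have close: "dist (e (SOME n. dist (e n) x < real_of_rat (f j))) x < real_of_rat (f j)" for x
    using dense assms(2) by (meson someI_ex zero_less_of_rat_iff)
  have "resp (shadow_strategy f) ms j
      = (SOME n. dist (e n) ((if even j then snd else fst) (shadow ms j)) < real_of_rat (f j))"
  proof -
    have "length (take (Suc j) ms) - 1 = j" using assms(3) by simp
    then show ?thesis unfolding resp_def shadow_strategy_def Let_def by (simp add: shadow_take)
  qed
  then show ?thesis
    using close by (simp add: cseq_def dseq_def shadow_eq shadow_next_def)
qed

lemma p2_wins_if_shadowed:
  assumes "pariso (as @ map fst ps) (bs @ map snd ps)" "length ps = k"
    and close: "\<forall>j<k. dist (e (c j)) (fst (ps ! j)) + dist (e (d j)) (snd (ps ! j)) < real_of_rat (f j)"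
  shows "p2_wins e f as bs k c d"
proof -
  let ?xs = "as @ map fst ps" and ?ys = "bs @ map snd ps"
  have len: "length as = length bs" using assms(1,2) by (simp add: pariso_def)
  have same: "dist (?xs ! i) (?xs ! j) = dist (?ys ! i) (?ys ! j)"
    if "i < length as + k" "j < length as + k" for i j
    using pariso_dist_eq[OF assms(1)] that assms(2) by simp
  have same_as: "dist (as ! i) (fst (ps ! j)) = dist (bs ! i) (snd (ps ! j))" if "i < length as" "j < k" for i j
    using same[of i "length as + j"] that len assms(2) by (simp add: nth_append)
  have same_ps: "dist (fst (ps ! i)) (fst (ps ! j)) = dist (snd (ps ! i)) (snd (ps ! j))"
    if "i < k" "j < k" for i j
    using same[of "length as + i" "length as + j"] that len assms(2) by (simp add: nth_append)
  show ?thesis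
    unfolding p2_wins_def
  proof (intro conjI allI impI)
    fix i j assume ij: "i < length as" "j < k"
    have "\<bar>dist (as ! i) (e (c j)) - dist (bs ! i) (e (d j))\<bar>
        \<le> dist (e (c j)) (fst (ps ! j)) + dist (e (d j)) (snd (ps ! j))"
      using abs_dist_diff_le_of_dist_eq[OF same_as[OF ij], of "as ! i" "e (c j)" "bs ! i" "e (d j)"] by simp
    then show "\<bar>dist (as ! i) (e (c j)) - dist (bs ! i) (e (d j))\<bar> < real_of_rat (f j)"
      using close[rule_format, OF ij(2)] by linarith
  next
    fix i j assume ij: "i < k" "j < k"
    have "\<bar>dist (e (c i)) (e (c j)) - dist (e (d i)) (e (d j))\<bar>
        \<le> dist (e (c i)) (fst (ps ! i)) + dist (e (c j)) (fst (ps ! j))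
          + dist (e (d i)) (snd (ps ! i)) + dist (e (d j)) (snd (ps ! j))"
      by (rule abs_dist_diff_le_of_dist_eq[OF same_ps[OF ij]])
    then show "\<bar>dist (e (c i)) (e (c j)) - dist (e (d i)) (e (d j))\<bar>
        < real_of_rat (f i) + real_of_rat (f j)"
      using close[rule_format, OF ij(1)] close[rule_format, OF ij(2)] by linarith
  qed
qed

lemma bf_imp_simf:
  fixes \<alpha> :: "'o::wellorder"
  assumes dense: "\<forall>x. \<forall>\<epsilon>>0. \<exists>n. dist (e n) x < \<epsilon>" and "f \<in> REC" and "bf \<alpha> as bs"
  shows "simf e f \<alpha> as bs"
  unfolding simf_def
proof (intro exI allI impI)
  fix ms :: "('o \<times> nat) list"
  assume ms: "p1_complete \<alpha> ms"
  define k where "k = length ms"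
  have "k > 0" using ms by (simp add: p1_complete_def k_def)
  then have "bf (fst (last ms)) (as @ map fst (shadows ms k)) (bs @ map snd (shadows ms k))"
    using bf_shadows[OF ms assms(3), of "k - 1"] ms by (simp add: k_def last_conv_nth p1_complete_def)
  moreover have "\<forall>\<beta>. \<not> \<beta> < fst (last ms)" using ms by (simp add: p1_complete_def)
  ultimately have "pariso (as @ map fst (shadows ms k)) (bs @ map snd (shadows ms k))"
    by (simp add: bf_zero)
  moreover have "\<forall>j<k. dist (e (cseq (shadow_strategy f) ms j)) (fst (shadows ms k ! j))
      + dist (e (dseq (shadow_strategy f) ms j)) (snd (shadows ms k ! j)) < real_of_rat (f j)"
    using \<open>f \<in> REC\<close> shadow_strategy_close[OF dense] by (auto simp: REC_def shadows_eq_map k_def)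
  ultimately show "p2_wins e f as bs (length ms) (cseq (shadow_strategy f) ms) (dseq (shadow_strategy f) ms)"
    unfolding k_def using p2_wins_if_shadowed length_shadows by blast
qed

end

lemma SRank_le_RRank:
  assumes "\<forall>(\<alpha>::'o::wellorder) f. f \<in> REC \<longrightarrow> bf \<alpha> as bs \<longrightarrow> simf e f \<alpha> as bs"
  shows "le_inf (SRank as bs :: 'o option) (RRank e as bs)"
proof (cases "\<exists>\<mu>::'o. \<exists>f\<in>REC. \<not> simf e f \<mu> as bs")
  case True
  define \<mu> where "\<mu> = (LEAST \<mu>::'o. \<exists>f\<in>REC. \<not> simf e f \<mu> as bs)"
  have "\<exists>f\<in>REC. \<not> simf e f \<mu> as bs" unfolding \<mu>_def using True by (rule LeastI_ex)
  then have "\<not> bf \<mu> as bs" using assms by blast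
  then have "\<exists>\<mu>::'o. \<not> bf \<mu> as bs" and "(LEAST \<mu>::'o. \<not> bf \<mu> as bs) \<le> \<mu>"
    by (auto intro: Least_le)
  then show ?thesis using True by (simp add: SRank_def RRank_def le_inf_def \<mu>_def)
qed (simp add: RRank_def le_inf_def)

theorem fact4p3:
  fixes e :: "nat \<Rightarrow> 'c::complete_space" and as bs :: "'c list"
  assumes "inj e"
    and "\<forall>x. \<forall>\<epsilon>>0. \<exists>n. dist (e n) x < \<epsilon>"
    and "length as = length bs"
  shows "(\<forall>(\<alpha>::'o::wellorder) f. f \<in> REC \<longrightarrow> bf \<alpha> as bs \<longrightarrow> simf e f \<alpha> as bs)
         \<and> le_inf (SRank as bs :: 'o option) (RRank e as bs)"
proof -
  have "\<forall>(\<alpha>::'o::wellorder) f. f \<in> REC \<longrightarrow> bf \<alpha> as bs \<longrightarrow> simf e f \<alpha> as bs"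
    using bf_imp_simf[OF assms(2)] by blast
  then show ?thesis using SRank_le_RRank by blast
qed

end
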